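(* Let $M\in\mathrm{SL}(n,\mathbb{Z})$ and suppose that for some integer $k\ge1$ the characteristic polynomial of $M^k$ is reducible over $\mathbb{Z}$. Then either the Galois group of the characteristic polynomial of $M$ (acting on its $n$ roots) is imprimitive, or the characteristic polynomial of $M$ is cyclotomic (all its roots are roots of unity).
   Context: A permutation group acting on a set $\Omega$ of size $n$ is called imprimitive if it preserves some partition of $\Omega$ other than the partition into singletons and the partition with the single block $\Omega$ (in particular, an intransitive group is imprimitive in this sense). *)

theory Defs
  imports "Jordan_Normal_Form.Char_Poly" "HOL-Library.Disjoint_Sets"
begin

definition is_subfield :: "complex set \<Rightarrow> bool" where
  "is_subfield F \<longleftrightarrow> 0 \<in> F \<and> 1 \<in> F \<and>
     (\<forall>x\<in>F. \<forall>y\<in>F. x + y \<in> F \<and> x - y \<in> F \<and> x * y \<in> F) \<and>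
     (\<forall>x\<in>F. inverse x \<in> F)"

definition croots :: "int poly \<Rightarrow> complex set" where
  "croots p = {z. poly (map_poly complex_of_int p) z = 0}"

definition splitting_field :: "int poly \<Rightarrow> complex set" where
  "splitting_field p = \<Inter> {F. is_subfield F \<and> croots p \<subseteq> F}"

definition field_aut :: "complex set \<Rightarrow> (complex \<Rightarrow> complex) \<Rightarrow> bool" where
  "field_aut K s \<longleftrightarrow> bij_betw s K K \<and>
     (\<forall>x\<in>K. \<forall>y\<in>K. s (x + y) = s x + s y \<and> s (x * y) = s x * s y)"

text \<open>The n roots of p counted with multiplicity: pairs (root, copy index).\<close>
definition root_slots :: "int poly \<Rightarrow> (complex \<times> nat) set" where
  "root_slots p = {(z, j). z \<in> croots p \<and> j < order z (map_poly complex_of_int p)}"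

text \<open>The Galois group of p, as permutations of its n roots (with multiplicity).\<close>
definition galois_perms :: "int poly \<Rightarrow> ((complex \<times> nat) \<Rightarrow> (complex \<times> nat)) set" where
  "galois_perms p = {(\<lambda>(z, j). (s z, j)) | s. field_aut (splitting_field p) s}"

definition imprimitive :: "'a set \<Rightarrow> ('a \<Rightarrow> 'a) set \<Rightarrow> bool" where
  "imprimitive \<Omega> G \<longleftrightarrow> (\<exists>P. partition_on \<Omega> P \<and> P \<noteq> (\<lambda>x. {x}) ` \<Omega> \<and> P \<noteq> {\<Omega>} \<and>
      (\<forall>g\<in>G. \<forall>B\<in>P. g ` B \<in> P))"

definition cyclotomic_poly :: "int poly \<Rightarrow> bool" where
  "cyclotomic_poly p \<longleftrightarrow> (\<forall>z\<in>croots p. \<exists>m>0. z ^ m = 1)"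

end

(* Triangularizing M over the complex numbers gives its eigenvalues z_1, ..., z_n with
   z_1 * ... * z_n = det M = 1, and the eigenvalues of M^k are the z_i^k.  If the Galois group
   of p = char_poly M is primitive, every Galois-invariant function on the roots is injective or
   constant.  Applied to the copy index of a root and to z |-> z^k this shows, unless p is
   cyclotomic, that the z_i are simple and their k-th powers distinct, so that q = char_poly (M^k)
   is squarefree.  For a factorization q = a * b into non-constant factors, "z^k is a root of a"
   is then a non-constant invariant function with values in bool; being injective it forces
   n <= 2.  So a and b are linear with unit leading coefficients, every z_i^k is an integer,
   and integers with product 1 are units: z_i^(2k) = 1 and p is cyclotomic after all. *)

theory Submission
  imports Defs "Jordan_Normal_Form.Schur_Decomposition"
begin

section \<open>Eigenvalues of matrix powers\<close>

lemma upper_triangular_mult_entry: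
  fixes A B :: "'a :: semiring_0 mat"
  assumes "A \<in> carrier_mat n n" "B \<in> carrier_mat n n"
    and "upper_triangular A" "upper_triangular B" and "i < n" "j < n"
  shows "(A * B) $$ (i, j) = (\<Sum>l\<in>{i..j}. A $$ (i, l) * B $$ (l, j))"
proof -
  have "(A * B) $$ (i, j) = (\<Sum>l\<in>{0..<n}. A $$ (i, l) * B $$ (l, j))"
    using assms by (simp add: scalar_prod_def)
  also have "\<dots> = (\<Sum>l\<in>{i..j}. A $$ (i, l) * B $$ (l, j))"
    using assms by (intro sum.mono_neutral_right) (auto simp: upper_triangular_def)
  finally show ?thesis .
qed

lemma upper_triangular_mult:
  fixes A B :: "'a :: semiring_0 mat"
  assumes "A \<in> carrier_mat n n" "B \<in> carrier_mat n n" "upper_triangular A" "upper_triangular B"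
  shows "upper_triangular (A * B)"
proof (rule upper_triangularI)
  fix i j assume "j < i" "i < dim_row (A * B)"
  then show "(A * B) $$ (i, j) = 0"
    using assms by (subst upper_triangular_mult_entry[OF assms]) auto
qed

lemma diag_upper_triangular_mult:
  fixes A B :: "'a :: semiring_0 mat"
  assumes "A \<in> carrier_mat n n" "B \<in> carrier_mat n n" "upper_triangular A" "upper_triangular B"
    and "i < n"
  shows "(A * B) $$ (i, i) = A $$ (i, i) * B $$ (i, i)"
  using assms by (subst upper_triangular_mult_entry[OF assms(1-4)]) auto

lemma upper_triangular_pow:
  fixes A :: "'a :: comm_semiring_1 mat"
  assumes A: "A \<in> carrier_mat n n" and "upper_triangular A"
  shows "upper_triangular (A ^\<^sub>m k)" "diag_mat (A ^\<^sub>m k) = map (\<lambda>a. a ^ k) (diag_mat A)"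
proof -
  have "upper_triangular (A ^\<^sub>m k) \<and> (\<forall>i<n. (A ^\<^sub>m k) $$ (i, i) = A $$ (i, i) ^ k)"
  proof (induction k)
    case (Suc k)
    have Ak: "A ^\<^sub>m k \<in> carrier_mat n n" using A by simp
    with Suc assms show ?case
      by (simp add: upper_triangular_mult[OF Ak A] diag_upper_triangular_mult[OF Ak A] mult.commute
          del: index_mult_mat)
  qed (use A in auto)
  then show "upper_triangular (A ^\<^sub>m k)" "diag_mat (A ^\<^sub>m k) = map (\<lambda>a. a ^ k) (diag_mat A)"
    using A by (auto simp: diag_mat_def)
qed

lemma char_poly_pow_linear_factors:
  fixes A :: "'a :: conjugatable_ordered_field mat"
  assumes A: "A \<in> carrier_mat n n" and "char_poly A = (\<Prod>a\<leftarrow>es. [:-a, 1:])"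
  obtains L where "char_poly A = (\<Prod>a\<leftarrow>L. [:-a, 1:])"
    "char_poly (A ^\<^sub>m k) = (\<Prod>a\<leftarrow>L. [:-(a ^ k), 1:])" "det A = prod_list L"
proof -
  obtain B where B: "B \<in> carrier_mat n n" and ut: "upper_triangular B" and sim: "similar_mat A B"
    using schur_decomposition_exists[OF assms] by blast
  have "similar_mat (A ^\<^sub>m k) (B ^\<^sub>m k)"
    using sim similar_mat_wit_pow unfolding similar_mat_def by blast
  then have "char_poly (A ^\<^sub>m k) = (\<Prod>a\<leftarrow>diag_mat B. [:-(a ^ k), 1:])"
    using upper_triangular_pow[OF B ut] B
    by (simp add: char_poly_similar char_poly_upper_triangular[of _ n] comp_def)
  moreover have "char_poly A = (\<Prod>a\<leftarrow>diag_mat B. [:-a, 1:])"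
    using sim B ut by (simp add: char_poly_similar char_poly_upper_triangular)
  moreover have "det A = prod_list (diag_mat B)"
    using sim B ut by (simp add: det_similar det_upper_triangular)
  ultimately show ?thesis by (intro that)
qed

lemma int_mat_eigenvalues:
  fixes M :: "int mat"
  assumes M: "M \<in> carrier_mat n n"
  obtains L :: "complex list" where "map_poly of_int (char_poly M) = (\<Prod>a\<leftarrow>L. [:-a, 1:])"
    "map_poly of_int (char_poly (M ^\<^sub>m k)) = (\<Prod>a\<leftarrow>L. [:-(a ^ k), 1:])"
    "prod_list L = of_int (det M)"
proof -
  define A where "A = map_mat (of_int :: int \<Rightarrow> complex) M"
  have A: "A \<in> carrier_mat n n" using M by (simp add: A_def)
  obtain es where "char_poly A = (\<Prod>a\<leftarrow>es. [:-a, 1:])"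
    using char_poly_factorized[OF A] by blast
  then obtain L where "char_poly A = (\<Prod>a\<leftarrow>L. [:-a, 1:])"
    and "char_poly (A ^\<^sub>m k) = (\<Prod>a\<leftarrow>L. [:-(a ^ k), 1:])" and "det A = prod_list L"
    by (rule char_poly_pow_linear_factors[OF A])
  moreover have "char_poly A = map_poly of_int (char_poly M)" "det A = of_int (det M)"
    using M unfolding A_def by (simp_all add: of_int_hom.char_poly_hom of_int_hom.hom_det)
  moreover have "char_poly (A ^\<^sub>m k) = map_poly of_int (char_poly (M ^\<^sub>m k))"
    using of_int_hom.char_poly_hom[of "M ^\<^sub>m k" n] M
    unfolding A_def of_int_hom.mat_hom_pow[OF M, symmetric] by simp
  ultimately show ?thesis using that by simp
qed

lemma poly_linear_factors_eq_0_iff: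
  "poly (\<Prod>a\<leftarrow>L. [:-a, 1:]) z = 0 \<longleftrightarrow> z \<in> set (L :: 'a :: idom list)"
  by (induction L) auto

lemma order_linear_factors:
  "Polynomial.order z (\<Prod>a\<leftarrow>L. [:-a, 1:]) = count_list L (z :: 'a :: idom)"
proof (induction L)
  case Nil
  then show ?case by (simp add: order_0I)
next
  case (Cons x L)
  have "(\<Prod>a\<leftarrow>x # L. [:-a, 1:]) \<noteq> 0"
    unfolding prod_list_zero_iff by auto
  then have "Polynomial.order z (\<Prod>a\<leftarrow>x # L. [:-a, 1:]) =
      Polynomial.order z [:-x, 1:] + Polynomial.order z (\<Prod>a\<leftarrow>L. [:-a, 1:])"
    by (simp only: list.map prod_list.Cons) (rule order_mult)
  moreover have "Polynomial.order z [:-x, 1:] = (if z = x then 1 else 0)"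
    using order_power_n_n[of x 1] by (auto intro: order_0I)
  ultimately show ?case using Cons.IH by simp
qed

lemma distinct_iff_count_list_le_1: "distinct xs \<longleftrightarrow> (\<forall>x. count_list xs x \<le> 1)"
proof (induction xs)
  case (Cons a xs)
  have "a \<notin> set xs \<longleftrightarrow> count_list xs a = 0" by (simp add: count_list_0_iff)
  with Cons show ?case by (auto simp: le_Suc_eq)
qed simp

lemma order_ge_iff_higher_pderiv_eq_0:
  fixes p :: "'a :: field_char_0 poly"
  assumes "p \<noteq> 0"
  shows "m \<le> Polynomial.order a p \<longleftrightarrow> (\<forall>i<m. poly ((pderiv ^^ i) p) a = 0)"
  using assms
proof (induction m arbitrary: p)
  case (Suc m)
  show ?case
  proof (cases "poly p a = 0")
    case root: True
    have "pderiv p \<noteq> 0"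
    proof
      assume "pderiv p = 0"
      then obtain h where "p = [:h:]" using pderiv_iszero by blast
      with root Suc.prems show False by simp
    qed
    have "Suc m \<le> Polynomial.order a p \<longleftrightarrow> m \<le> Polynomial.order a (pderiv p)"
      using order_pderiv[OF Suc.prems root] by simp
    also have "\<dots> \<longleftrightarrow> (\<forall>i<m. poly ((pderiv ^^ i) (pderiv p)) a = 0)"
      using Suc.IH[OF \<open>pderiv p \<noteq> 0\<close>] .
    also have "\<dots> \<longleftrightarrow> (\<forall>i<Suc m. poly ((pderiv ^^ i) p) a = 0)"
      using root by (auto simp: less_Suc_eq_0_disj funpow_Suc_right simp del: funpow.simps)
    finally show ?thesis .
  qed (auto simp: order_0I intro!: exI[of _ 0])
qed simp

section \<open>Automorphisms of subfields of the complex numbers\<close>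

lemma is_subfield_Inter: "(\<And>F. F \<in> \<F> \<Longrightarrow> is_subfield F) \<Longrightarrow> is_subfield (\<Inter>\<F>)"
  unfolding is_subfield_def by blast

lemma is_subfield_splitting_field: "is_subfield (splitting_field p)"
  unfolding splitting_field_def by (rule is_subfield_Inter) simp

lemma croots_subset_splitting_field: "croots p \<subseteq> splitting_field p"
  unfolding splitting_field_def by auto

lemma subfield_of_int:
  assumes K: "is_subfield K"
  shows "of_int c \<in> K"
proof -
  have nat: "of_nat m \<in> K" for m
    using K by (induction m) (auto simp: is_subfield_def)
  obtain m n where "c = int m - int n" by (rule int_diff_cases)
  then have "of_int c = (of_nat m - of_nat n :: complex)" by simp
  then show ?thesis using nat[of m] nat[of n] K unfolding is_subfield_def by simp
qed

lemma subfield_poly_of_int: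
  assumes K: "is_subfield K" and w: "w \<in> K"
  shows "poly (map_poly of_int a) w \<in> K"
proof (induction a)
  case (pCons c a)
  then show ?case
    using K w subfield_of_int[OF K, of c] unfolding is_subfield_def
    by (simp add: of_int_hom.map_poly_pCons_hom)
qed (use K in \<open>simp add: is_subfield_def\<close>)

lemma subfield_power:
  assumes "is_subfield K" and "w \<in> K"
  shows "w ^ m \<in> K"
  using subfield_poly_of_int[OF assms, of "monom 1 m"] by (simp add: poly_monom)

context
  fixes K :: "complex set" and s :: "complex \<Rightarrow> complex"
  assumes K: "is_subfield K" and s: "field_aut K s"
begin

lemma field_aut_eq_iff: "x \<in> K \<Longrightarrow> y \<in> K \<Longrightarrow> s x = s y \<longleftrightarrow> x = y"
  using s unfolding field_aut_def by (metis bij_betw_imp_inj_on inj_on_eq_iff)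

lemma field_aut_diff:
  assumes "x \<in> K" "y \<in> K"
  shows "s (x - y) = s x - s y"
proof -
  have "x - y \<in> K" using K assms by (simp add: is_subfield_def)
  then have "s x = s (x - y) + s y"
    using s assms unfolding field_aut_def by (metis diff_add_cancel)
  then show ?thesis by simp
qed

lemma field_aut_one: "s 1 = 1"
proof -
  have K01: "0 \<in> K" "1 \<in> K" using K by (auto simp: is_subfield_def)
  then have "s 1 = s 1 * s 1" using s unfolding field_aut_def by (metis mult_1)
  moreover have "s 1 \<noteq> 0"
    using field_aut_diff[OF K01(1) K01(1)] field_aut_eq_iff[OF K01] by auto
  ultimately show ?thesis by (metis mult_cancel_right1)
qed

lemma field_aut_of_int: "s (of_int c) = of_int c"
proof -
  have "s (of_nat m) = of_nat m" for m
  proof (induction m)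
    case 0
    then show ?case using field_aut_diff[of 0 0] K by (simp add: is_subfield_def)
  next
    case (Suc m)
    have "of_nat m \<in> K" using subfield_of_int[OF K, of "int m"] by simp
    then show ?case
      using Suc s K field_aut_one unfolding field_aut_def is_subfield_def by simp
  qed
  moreover obtain m n where "c = int m - int n" by (rule int_diff_cases)
  moreover have "of_nat m \<in> K" "of_nat n \<in> K"
    using subfield_of_int[OF K, of "int m"] subfield_of_int[OF K, of "int n"] by simp_all
  ultimately show ?thesis by (simp add: field_aut_diff)
qed

lemma field_aut_poly_of_int:
  assumes w: "w \<in> K"
  shows "s (poly (map_poly of_int a) w) = poly (map_poly of_int a) (s w)"
proof (induction a)
  case 0
  then show ?case using field_aut_of_int[of 0] by simp
next
  case (pCons c a)
  have P: "poly (map_poly of_int a) w \<in> K" by (rule subfield_poly_of_int[OF K w])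
  then have "w * poly (map_poly of_int a) w \<in> K" using K w by (simp add: is_subfield_def)
  then have "s (of_int c + w * poly (map_poly of_int a) w) =
      s (of_int c) + s w * s (poly (map_poly of_int a) w)"
    using s w P subfield_of_int[OF K, of c] unfolding field_aut_def by simp
  then show ?case
    using pCons.IH by (simp add: of_int_hom.map_poly_pCons_hom field_aut_of_int)
qed

lemma field_aut_poly_of_int_eq_0_iff:
  assumes "w \<in> K"
  shows "poly (map_poly of_int a) (s w) = 0 \<longleftrightarrow> poly (map_poly of_int a) w = 0"
proof -
  have "s 0 = 0" using field_aut_of_int[of 0] by simp
  then have "poly (map_poly of_int a) (s w) = 0 \<longleftrightarrow> s (poly (map_poly of_int a) w) = s 0"
    using field_aut_poly_of_int[OF assms, of a] by simp
  also have "\<dots> \<longleftrightarrow> poly (map_poly of_int a) w = 0"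
    using field_aut_eq_iff[OF subfield_poly_of_int[OF K assms] subfield_of_int[OF K, of 0]] by simp
  finally show ?thesis .
qed

lemma field_aut_power:
  assumes "w \<in> K"
  shows "s (w ^ m) = s w ^ m"
  using field_aut_poly_of_int[OF assms, of "monom 1 m"] by (simp add: poly_monom)

lemma field_aut_order:
  assumes "w \<in> K" and "p \<noteq> 0"
  shows "Polynomial.order (s w) (map_poly of_int p) = Polynomial.order w (map_poly of_int p)"
proof -
  \<comment> \<open>the higher derivatives of an integer polynomial are integer polynomials\<close>
  have "m \<le> Polynomial.order (s w) (map_poly of_int p) \<longleftrightarrow>
      m \<le> Polynomial.order w (map_poly of_int p)" for m
    using assms
    by (simp add: order_ge_iff_higher_pderiv_eq_0 field_aut_poly_of_int_eq_0_iff
        flip: of_int_hom.map_poly_higher_pderiv)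
  then show ?thesis by (meson order.antisym order.refl)
qed

end

lemma field_aut_croots:
  assumes "p \<noteq> 0" and s: "field_aut (splitting_field p) s"
  shows "s ` croots p = croots p"
proof (rule endo_inj_surj)
  note K = is_subfield_splitting_field[of p] and R = croots_subset_splitting_field[of p]
  show "finite (croots p)"
    using assms(1) poly_roots_finite[of "map_poly of_int p :: complex poly"] by (simp add: croots_def)
  show "s ` croots p \<subseteq> croots p"
    using R field_aut_poly_of_int_eq_0_iff[OF K s] by (auto simp: croots_def)
  show "inj_on s (croots p)"
    using R field_aut_eq_iff[OF K s] unfolding inj_on_def by blast
qed

lemma galois_perms_root_slots:
  assumes "p \<noteq> 0" and "g \<in> galois_perms p"
  shows "g ` root_slots p = root_slots p"
proof -
  obtain s where g: "g = (\<lambda>(z, j). (s z, j))" and s: "field_aut (splitting_field p) s"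
    using assms(2) unfolding galois_perms_def by blast
  have order: "Polynomial.order (s z) (map_poly of_int p) = Polynomial.order z (map_poly of_int p)"
    if "z \<in> croots p" for z
    using field_aut_order[OF is_subfield_splitting_field s] croots_subset_splitting_field that assms(1)
    by auto
  have "g ` root_slots p \<subseteq> root_slots p"
    using field_aut_croots[OF assms(1) s] order by (auto simp: g root_slots_def)
  moreover have "root_slots p \<subseteq> g ` root_slots p"
  proof
    fix x assume "x \<in> root_slots p"
    then obtain z j where x: "x = (s z, j)" and z: "z \<in> croots p"
      and j: "j < Polynomial.order (s z) (map_poly of_int p)"
      using field_aut_croots[OF assms(1) s] unfolding root_slots_def by fastforce
    then have "(z, j) \<in> root_slots p" using order by (simp add: root_slots_def)
    then show "x \<in> g ` root_slots p" using x g by force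
  qed
  ultimately show ?thesis by blast
qed

section \<open>Invariant functions of primitive groups\<close>

lemma not_imprimitive_inj_or_constant:
  assumes "\<not> imprimitive \<Omega> G"
    and perm: "\<And>g. g \<in> G \<Longrightarrow> g ` \<Omega> = \<Omega>"
    and invariant: "\<And>g x y. g \<in> G \<Longrightarrow> x \<in> \<Omega> \<Longrightarrow> y \<in> \<Omega> \<Longrightarrow> f (g x) = f (g y) \<longleftrightarrow> f x = f y"
  shows "inj_on f \<Omega> \<or> (\<forall>x\<in>\<Omega>. \<forall>y\<in>\<Omega>. f x = f y)"
proof -
  define fibre where "fibre x = {y \<in> \<Omega>. f y = f x}" for x
  have part: "partition_on \<Omega> (fibre ` \<Omega>)"
  proof (rule partition_onI)
    show "\<Union>(fibre ` \<Omega>) = \<Omega>" "{} \<notin> fibre ` \<Omega>" by (auto simp: fibre_def)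
    show "disjnt B C" if "B \<in> fibre ` \<Omega>" "C \<in> fibre ` \<Omega>" "B \<noteq> C" for B C
      using that by (auto simp: fibre_def disjnt_def)
  qed
  have invariant_blocks: "g ` B \<in> fibre ` \<Omega>" if g: "g \<in> G" and "B \<in> fibre ` \<Omega>" for g B
  proof -
    obtain x where x: "x \<in> \<Omega>" and B: "B = fibre x" using \<open>B \<in> fibre ` \<Omega>\<close> by blast
    have "g ` fibre x = fibre (g x)"
    proof
      show "g ` fibre x \<subseteq> fibre (g x)"
        using perm[OF g] invariant[OF g _ x] by (auto simp: fibre_def)
      show "fibre (g x) \<subseteq> g ` fibre x"
      proof
        fix w assume w: "w \<in> fibre (g x)"
        then have "w \<in> g ` \<Omega>" using perm[OF g] by (simp add: fibre_def)
        then obtain y where y: "y \<in> \<Omega>" "w = g y" by blast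
        with w have "f y = f x" using invariant[OF g y(1) x] by (simp add: fibre_def)
        then have "y \<in> fibre x" using y(1) by (simp add: fibre_def)
        then show "w \<in> g ` fibre x" using y(2) by blast
      qed
    qed
    moreover have "g x \<in> \<Omega>" using perm[OF g] x by blast
    ultimately show ?thesis using B by blast
  qed
  have "fibre ` \<Omega> = (\<lambda>x. {x}) ` \<Omega> \<or> fibre ` \<Omega> = {\<Omega>}"
  proof (rule ccontr)
    assume "\<not> ?thesis"
    then have "imprimitive \<Omega> G"
      unfolding imprimitive_def using part invariant_blocks by (intro exI[of _ "fibre ` \<Omega>"]) simp
    then show False using assms(1) by contradiction
  qed
  moreover have self_mem: "x \<in> fibre x" if "x \<in> \<Omega>" for x using that by (simp add: fibre_def)
  ultimately show ?thesis
  proof (elim disjE)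
    assume singletons: "fibre ` \<Omega> = (\<lambda>x. {x}) ` \<Omega>"
    have "fibre x = {x}" if "x \<in> \<Omega>" for x
    proof -
      from that have "fibre x \<in> (\<lambda>x. {x}) ` \<Omega>" unfolding singletons[symmetric] by (rule imageI)
      then obtain c where "fibre x = {c}" by blast
      with self_mem[OF that] show ?thesis by simp
    qed
    then show ?thesis unfolding inj_on_def fibre_def by blast
  next
    assume whole: "fibre ` \<Omega> = {\<Omega>}"
    have "fibre x = \<Omega>" if "x \<in> \<Omega>" for x
      using imageI[OF that, of fibre] unfolding whole by simp
    then show ?thesis unfolding fibre_def by blast
  qed
qed

lemma roots_of_unity_if_powers_equal:
  fixes L :: "'a :: comm_monoid_mult list"
  assumes "prod_list L = 1" and "\<forall>z\<in>set L. z ^ k = c" and "z \<in> set L"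
  shows "z ^ (k * length L) = 1"
proof -
  have "c ^ length L = prod_list (map (\<lambda>z. z ^ k) L)"
    using assms(2) by (induction L) auto
  also have "\<dots> = prod_list L ^ k" by (simp add: prod_list_power)
  finally show ?thesis using assms by (simp add: power_mult)
qed

lemma square_eq_1_if_Ints_prod_list_eq_1:
  fixes xs :: "'a :: {idom, ring_char_0} list"
  assumes "set xs \<subseteq> \<int>" and "prod_list xs = 1" and "x \<in> set xs"
  shows "x ^ 2 = 1"
proof -
  have "\<forall>y\<in>set xs. \<exists>m. y = of_int m" using assms(1) by (auto elim!: Ints_cases)
  then obtain ms where xs: "xs = map of_int ms" by (auto simp flip: ex_map_conv)
  then obtain m where x: "x = of_int m" and "m \<in> set ms" using assms(3) by auto
  moreover have "prod_list ms = 1"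
    using assms(2) unfolding xs by (metis of_int_eq_1_iff of_int_hom.hom_prod_list)
  ultimately have "m dvd 1" by (metis prod_list_dvd)
  then have "m ^ 2 = 1" by (auto simp: zdvd1_eq abs_if power2_eq_square split: if_splits)
  then show ?thesis unfolding x by (metis of_int_eq_1_iff of_int_power)
qed

lemma linear_int_poly_root_Ints:
  fixes c :: "int poly" and w :: "'a :: comm_ring_1"
  assumes "degree c = 1" and "lead_coeff c dvd 1" and "poly (map_poly of_int c) w = 0"
  shows "w \<in> \<int>"
proof -
  obtain c0 c1 where c: "c = [:c0, c1:]" and "c1 \<noteq> 0" using assms(1) by (rule degree1_coeffs)
  then have "c1 * c1 = 1" using assms(2) by (auto simp: zdvd1_eq abs_if split: if_splits)
  have "of_int c0 + w * of_int c1 = 0"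
    using assms(3) c by (simp add: of_int_hom.map_poly_pCons_hom)
  then have root: "w * of_int c1 = - of_int c0" by (simp add: add_eq_0_iff)
  have "w = w * of_int (c1 * c1)" using \<open>c1 * c1 = 1\<close> by simp
  also have "\<dots> = - of_int (c0 * c1)" using root by (simp add: mult.assoc[symmetric])
  finally show ?thesis by simp
qed

lemma monic_not_irreducible_factors:
  fixes q :: "int poly"
  assumes "lead_coeff q = 1" and "degree q > 0" and "\<not> irreducible q"
  obtains a b where "q = a * b" "degree a > 0" "degree b > 0"
    "lead_coeff a dvd 1" "lead_coeff b dvd 1"
proof -
  have "q \<noteq> 0" "\<not> q dvd 1" using assms(2) by (auto dest: is_unit_poly_iff[THEN iffD1])
  then obtain a b where q: "q = a * b" and "\<not> a dvd 1" "\<not> b dvd 1"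
    using assms(3) unfolding irreducible_def by blast
  moreover have units: "lead_coeff a dvd 1" "lead_coeff b dvd 1"
    using assms(1) q by (metis dvd_triv_left dvd_triv_right lead_coeff_mult)+
  ultimately have "degree a > 0" "degree b > 0"
    by (metis gr0I is_unit_const_poly_iff degree_0_id)+
  then show ?thesis using that q units by blast
qed

section \<open>Primitive Galois group of a non-cyclotomic polynomial\<close>

lemma croots_linear_factors:
  assumes "map_poly of_int p = (\<Prod>a\<leftarrow>L. [:-a, 1:])"
  shows "croots p = set L"
  by (simp add: croots_def assms poly_linear_factors_eq_0_iff)

lemma root_slots_linear_factors:
  assumes "map_poly of_int p = (\<Prod>a\<leftarrow>L. [:-a, 1:])"
  shows "root_slots p = {(z, j). z \<in> set L \<and> j < count_list L z}"
  by (simp add: root_slots_def croots_linear_factors[OF assms] assms order_linear_factors)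

context
  fixes p :: "int poly" and L :: "complex list"
  assumes linear_factors: "map_poly of_int p = (\<Prod>a\<leftarrow>L. [:-a, 1:])"
    and prod_roots: "prod_list L = 1"
    and primitive: "\<not> imprimitive (root_slots p) (galois_perms p)"
    and not_cyclotomic: "\<not> cyclotomic_poly p"
begin

lemmas croots_eq_set = croots_linear_factors[OF linear_factors]
  and root_slots_eq = root_slots_linear_factors[OF linear_factors]

lemma root_in_slots: "z \<in> set L \<Longrightarrow> (z, 0) \<in> root_slots p"
  using count_list_0_iff[of L z] by (simp add: root_slots_eq)

lemma roots_nonempty: "L \<noteq> []"
  using not_cyclotomic by (auto simp: cyclotomic_poly_def croots_eq_set)

lemma galois_invariant_inj_or_constant:
  assumes "\<And>s z j z' j'. field_aut (splitting_field p) s \<Longrightarrow>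
      (z, j) \<in> root_slots p \<Longrightarrow> (z', j') \<in> root_slots p \<Longrightarrow>
      f (s z, j) = f (s z', j') \<longleftrightarrow> f (z, j) = f (z', j')"
  shows "inj_on f (root_slots p) \<or> (\<forall>x\<in>root_slots p. \<forall>y\<in>root_slots p. f x = f y)"
proof (rule not_imprimitive_inj_or_constant[OF primitive])
  have "p \<noteq> 0" using linear_factors by (auto simp: prod_list_zero_iff)
  then show "g ` root_slots p = root_slots p" if "g \<in> galois_perms p" for g
    using galois_perms_root_slots that by blast
  show "f (g x) = f (g y) \<longleftrightarrow> f x = f y"
    if g: "g \<in> galois_perms p" and x: "x \<in> root_slots p" and y: "y \<in> root_slots p" for g x y
  proof -
    obtain s where "g = (\<lambda>(z, j). (s z, j))" "field_aut (splitting_field p) s"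
      using g unfolding galois_perms_def by blast
    moreover obtain z j z' j' where "x = (z, j)" "y = (z', j')" by fastforce
    ultimately show ?thesis using x y assms by simp
  qed
qed

lemma powers_not_all_equal:
  assumes "k > 0"
  shows "\<not> (\<forall>z\<in>set L. z ^ k = c)"
proof
  assume "\<forall>z\<in>set L. z ^ k = c"
  then have "\<forall>z\<in>set L. z ^ (k * length L) = 1"
    using roots_of_unity_if_powers_equal[OF prod_roots] by blast
  moreover have "k * length L > 0" using assms roots_nonempty by simp
  ultimately show False
    using not_cyclotomic unfolding cyclotomic_poly_def croots_eq_set by blast
qed

lemma distinct_roots: "distinct L"
proof -
  have "inj_on snd (root_slots p) \<or> (\<forall>x\<in>root_slots p. \<forall>y\<in>root_slots p. snd x = snd y)"
    by (rule galois_invariant_inj_or_constant) simp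
  then show ?thesis
  proof
    assume inj: "inj_on snd (root_slots p)"
    have "z = hd L" if "z \<in> set L" for z
      using inj_onD[OF inj _ root_in_slots[OF that] root_in_slots[OF hd_in_set[OF roots_nonempty]]]
      by simp
    then show ?thesis using powers_not_all_equal[of 1 "hd L"] by simp
  next
    assume snd_constant: "\<forall>x\<in>root_slots p. \<forall>y\<in>root_slots p. snd x = snd y"
    have "count_list L z \<le> 1" for z
    proof (rule ccontr)
      assume "\<not> count_list L z \<le> 1"
      then have "(z, 1) \<in> root_slots p" "(z, 0) \<in> root_slots p"
        using count_list_0_iff[of L z] by (auto simp: root_slots_eq)
      with snd_constant show False by fastforce
    qed
    then show ?thesis by (simp add: distinct_iff_count_list_le_1)
  qed
qed

lemma root_slots_eq_distinct: "root_slots p = (\<lambda>z. (z, 0)) ` set L"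
proof -
  have "count_list L z = 1" if "z \<in> set L" for z
  proof -
    have "count_list L z \<le> 1" using distinct_roots by (simp add: distinct_iff_count_list_le_1)
    moreover have "count_list L z \<noteq> 0" using that by (simp add: count_list_0_iff)
    ultimately show ?thesis by simp
  qed
  then show ?thesis by (force simp: root_slots_eq)
qed

lemma distinct_root_powers:
  assumes "k > 0"
  shows "distinct (map (\<lambda>z. z ^ k) L)"
proof -
  note K = is_subfield_splitting_field[of p]
  have "s z ^ k = s z' ^ k \<longleftrightarrow> z ^ k = z' ^ k"
    if s: "field_aut (splitting_field p) s" and "z \<in> set L" "z' \<in> set L" for s z z'
  proof -
    have "z \<in> splitting_field p" "z' \<in> splitting_field p"
      using that(2,3) croots_subset_splitting_field croots_eq_set by blast+
    then show ?thesis
      by (simp add: field_aut_eq_iff[OF K s] subfield_power[OF K] flip: field_aut_power[OF K s])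
  qed
  then have "inj_on (\<lambda>x. fst x ^ k) (root_slots p) \<or>
      (\<forall>x\<in>root_slots p. \<forall>y\<in>root_slots p. fst x ^ k = fst y ^ k)"
    by (intro galois_invariant_inj_or_constant) (auto simp: root_slots_eq_distinct)
  then have "inj_on (\<lambda>z. z ^ k) (set L)"
  proof
    assume "inj_on (\<lambda>x. fst x ^ k) (root_slots p)"
    then show ?thesis unfolding root_slots_eq_distinct by (auto simp: inj_on_def)
  next
    assume "\<forall>x\<in>root_slots p. \<forall>y\<in>root_slots p. fst x ^ k = fst y ^ k"
    then have "\<forall>z\<in>set L. z ^ k = hd L ^ k"
      using root_in_slots hd_in_set[OF roots_nonempty] by (metis fst_conv)
    with powers_not_all_equal[OF assms] show ?thesis by blast
  qed
  then show ?thesis using distinct_roots by (simp add: distinct_map)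
qed

context
  fixes k :: nat and q :: "int poly"
  assumes k: "k > 0"
    and power_factors: "map_poly of_int q = (\<Prod>z\<leftarrow>L. [:-(z ^ k), 1:])"
begin

lemma power_factors_map: "map_poly of_int q = (\<Prod>a\<leftarrow>map (\<lambda>z. z ^ k) L. [:-a, 1:])"
  by (simp add: power_factors comp_def)

lemma power_poly_eq_0_iff: "poly (map_poly of_int q) w = 0 \<longleftrightarrow> (\<exists>z\<in>set L. w = z ^ k)"
  unfolding power_factors_map poly_linear_factors_eq_0_iff by auto

lemma power_poly_order_le_1: "Polynomial.order (w :: complex) (map_poly of_int q) \<le> 1"
  using distinct_root_powers[OF k]
  unfolding power_factors_map order_linear_factors by (simp add: distinct_iff_count_list_le_1)

lemma degree_power_poly: "degree q = length L"
proof -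
  have "degree (map_poly (of_int :: int \<Rightarrow> complex) q) = length L"
    unfolding power_factors by (rule degree_linear_factors)
  then show ?thesis by simp
qed

lemma lead_coeff_power_poly: "lead_coeff q = 1"
proof -
  have "lead_coeff (map_poly (of_int :: int \<Rightarrow> complex) q) = 1"
    unfolding power_factors by (intro monic_prod_list) auto
  then show ?thesis by simp
qed

lemma factor_has_power_root:
  assumes "q = a * b" and "degree a > 0"
  obtains z where "z \<in> set L" "poly (map_poly of_int a) (z ^ k) = (0 :: complex)"
proof -
  have "\<not> constant (poly (map_poly (of_int :: int \<Rightarrow> complex) a))"
    using assms(2) by (simp add: constant_degree)
  then obtain w :: complex where w: "poly (map_poly of_int a) w = 0"
    using fundamental_theorem_of_algebra by blast
  then have "poly (map_poly of_int q) w = 0" by (simp add: assms(1) of_int_poly_hom.hom_mult)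
  then obtain z where "z \<in> set L" "w = z ^ k" using power_poly_eq_0_iff by blast
  then show ?thesis using that w by blast
qed

lemma factors_no_common_root:
  assumes "q = a * b"
    and "poly (map_poly of_int a) w = (0 :: complex)" and "poly (map_poly of_int b) w = 0"
  shows False
proof -
  define A B where "A = map_poly (of_int :: int \<Rightarrow> complex) a"
    and "B = map_poly (of_int :: int \<Rightarrow> complex) b"
  have AB: "map_poly of_int q = A * B"
    unfolding A_def B_def assms(1) by (rule of_int_poly_hom.hom_mult)
  moreover have "map_poly (of_int :: int \<Rightarrow> complex) q \<noteq> 0"
    unfolding power_factors by (auto simp: prod_list_zero_iff)
  ultimately have "A \<noteq> 0" "B \<noteq> 0" and "Polynomial.order w (A * B) = Polynomial.order w A + Polynomial.order w B"
    by (auto intro: order_mult)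
  moreover have "Polynomial.order w A \<noteq> 0" "Polynomial.order w B \<noteq> 0"
    using assms(2,3) \<open>A \<noteq> 0\<close> \<open>B \<noteq> 0\<close> unfolding A_def B_def order_root by auto
  ultimately show False using power_poly_order_le_1[of w] AB by simp
qed

lemma length_le_2_if_factors:
  assumes q: "q = a * b" and "degree a > 0" "degree b > 0"
  shows "length L \<le> 2"
proof -
  define root_of_a where "root_of_a x \<longleftrightarrow> poly (map_poly of_int a) (fst x ^ k) = (0 :: complex)"
    for x :: "complex \<times> nat"
  note K = is_subfield_splitting_field[of p]
  have "poly (map_poly of_int a) (s z ^ k) = 0 \<longleftrightarrow> poly (map_poly of_int a) (z ^ k) = (0 :: complex)"
    if s: "field_aut (splitting_field p) s" and "z \<in> set L" for s z
  proof -
    have "z \<in> splitting_field p"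
      using that(2) croots_subset_splitting_field croots_eq_set by blast
    then show ?thesis
      by (simp add: subfield_power[OF K] field_aut_poly_of_int_eq_0_iff[OF K s]
          flip: field_aut_power[OF K s])
  qed
  then have "inj_on root_of_a (root_slots p) \<or>
      (\<forall>x\<in>root_slots p. \<forall>y\<in>root_slots p. root_of_a x = root_of_a y)"
    by (intro galois_invariant_inj_or_constant) (auto simp: root_of_a_def root_slots_eq)
  moreover obtain za where za: "za \<in> set L" "root_of_a (za, 0)"
    using factor_has_power_root[OF q assms(2)] unfolding root_of_a_def by auto
  moreover obtain zb where zb: "zb \<in> set L" "poly (map_poly of_int b) (zb ^ k) = (0 :: complex)"
    using factor_has_power_root[of b a] q assms(3) by (auto simp: mult.commute)
  then have "\<not> root_of_a (zb, 0)"
    using factors_no_common_root[OF q] unfolding root_of_a_def by auto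
  ultimately have "inj_on root_of_a (root_slots p)"
    using root_in_slots[OF za(1)] root_in_slots[OF zb(1)] by blast
  then have "card (root_slots p) \<le> card (UNIV :: bool set)"
    by (rule card_inj_on_le) auto
  moreover have "card (root_slots p) = length L"
    using distinct_roots
    by (simp add: root_slots_eq_distinct card_image inj_on_def distinct_card)
  ultimately show ?thesis by simp
qed

lemma irreducible_power_poly: "irreducible q"
proof (rule ccontr)
  assume "\<not> irreducible q"
  moreover have "degree q > 0" using degree_power_poly roots_nonempty by simp
  ultimately obtain a b where q: "q = a * b" and deg: "degree a > 0" "degree b > 0"
    and units: "lead_coeff a dvd 1" "lead_coeff b dvd 1"
    using monic_not_irreducible_factors[OF lead_coeff_power_poly] by blast
  have "a \<noteq> 0" "b \<noteq> 0" using deg by auto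
  then have "degree a + degree b \<le> 2"
    using length_le_2_if_factors[OF q deg] degree_power_poly q by (simp add: degree_mult_eq)
  then have linear: "degree a = 1" "degree b = 1" using deg by auto
  have "z ^ k \<in> \<int>" if "z \<in> set L" for z
  proof -
    have "poly (map_poly of_int q) (z ^ k) = 0" using power_poly_eq_0_iff that by blast
    then have "poly (map_poly of_int a) (z ^ k) = 0 \<or> poly (map_poly of_int b) (z ^ k) = 0"
      by (simp add: q of_int_poly_hom.hom_mult)
    then show ?thesis using linear_int_poly_root_Ints linear units by blast
  qed
  moreover have "prod_list (map (\<lambda>z. z ^ k) L) = 1"
    using prod_roots prod_list_power[of L k] by simp
  ultimately have "(z ^ k) ^ 2 = 1" if "z \<in> set L" for z
    using square_eq_1_if_Ints_prod_list_eq_1[of "map (\<lambda>z. z ^ k) L"] that by auto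
  then have "\<forall>z\<in>set L. z ^ (k * 2) = 1" by (simp add: power_mult)
  moreover have "k * 2 > 0" using k by simp
  ultimately show False
    using not_cyclotomic unfolding cyclotomic_poly_def croots_eq_set by blast
qed

end

end

theorem lemma8p3:
  fixes M :: "int mat" and n k :: nat
  assumes "M \<in> carrier_mat n n" and "det M = 1"
    and "k \<ge> 1" and "\<not> irreducible (char_poly (M ^\<^sub>m k))"
  shows "imprimitive (root_slots (char_poly M)) (galois_perms (char_poly M))
         \<or> cyclotomic_poly (char_poly M)"
proof -
  obtain L :: "complex list" where p: "map_poly of_int (char_poly M) = (\<Prod>a\<leftarrow>L. [:-a, 1:])"
    and q: "map_poly of_int (char_poly (M ^\<^sub>m k)) = (\<Prod>a\<leftarrow>L. [:-(a ^ k), 1:])"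
    and "prod_list L = of_int (det M)"
    by (rule int_mat_eigenvalues[OF assms(1)])
  then have det: "prod_list L = 1" using assms(2) by simp
  have "k > 0" using assms(3) by simp
  with irreducible_power_poly[OF p det _ _ this q] assms(4) show ?thesis by blast
qed

end
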